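(* Let $g\ge2$, $d\ge2$, let $\sigma$ be a conjugacy class of $S_d$ of cycle type $(l_1)\cdots(l_m)$ with $\sum l_i=d$ and $\sum(l_i-1)=2g-2$, and let $(1^{a_1}2^{a_2}\cdots d^{a_d})$ be any cycle type of $S_d$. Then there is no pair $(\alpha,\beta)\in S_d\times S_d$ such that $\alpha\beta\alpha^{-1}\beta^{-1}\in\sigma$, $\langle\alpha,\beta\rangle$ is transitive, $\beta$ has cycle type $(1^{a_1}2^{a_2}\cdots d^{a_d})$, and both $\alpha$ and $\beta$ commute with the $d$-cycle $(12\cdots d)$.
   Context: $(1^{a_1}2^{a_2}\cdots d^{a_d})$ denotes the conjugacy class of permutations with $a_i$ cycles of length $i$, $\sum ia_i=d$. *)

theory Defs
  imports "HOL-Combinatorics.Orbits" "HOL-Combinatorics.Cycles" "HOL-Combinatorics.Permutations"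
    "HOL-Library.Multiset"
begin

definition cycle_type :: "nat \<Rightarrow> (nat \<Rightarrow> nat) \<Rightarrow> nat multiset" where
  "cycle_type d p = image_mset card (mset_set ((\<lambda>x. orbit p x) ` {1..d}))"

inductive_set gen_group :: "(nat \<Rightarrow> nat) \<Rightarrow> (nat \<Rightarrow> nat) \<Rightarrow> (nat \<Rightarrow> nat) set"
  for a b where
  gen_id: "id \<in> gen_group a b"
| gen_a: "g \<in> gen_group a b \<Longrightarrow> a \<circ> g \<in> gen_group a b"
| gen_b: "g \<in> gen_group a b \<Longrightarrow> b \<circ> g \<in> gen_group a b"
| gen_ai: "g \<in> gen_group a b \<Longrightarrow> inv a \<circ> g \<in> gen_group a b"
| gen_bi: "g \<in> gen_group a b \<Longrightarrow> inv b \<circ> g \<in> gen_group a b"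

definition transitive_on :: "nat \<Rightarrow> (nat \<Rightarrow> nat) \<Rightarrow> (nat \<Rightarrow> nat) \<Rightarrow> bool" where
  "transitive_on d a b \<longleftrightarrow> (\<forall>i\<in>{1..d}. \<forall>j\<in>{1..d}. \<exists>g\<in>gen_group a b. g i = j)"

definition dcycle :: "nat \<Rightarrow> nat \<Rightarrow> nat" where
  "dcycle d = cycle_of_list [1..<d+1]"

end

theory Submission
  imports Defs
begin

text \<open>Every element of \<open>{1..d}\<close> is a power of the \<open>d\<close>-cycle \<open>c\<close> applied to \<open>1\<close>, so a permutation
  commuting with \<open>c\<close> is determined by its value at \<open>1\<close>, which is itself \<open>c\<^sup>k 1\<close>: the centraliser of
  \<open>c\<close> consists of powers of \<open>c\<close> and is abelian. Hence the commutator of \<open>\<alpha>\<close> and \<open>\<beta>\<close> is the identity,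
  whose cycle type consists of \<open>d\<close> fixed points and has genus contribution
  \<open>\<Sum>(l\<^sub>i - 1) = 0 \<noteq> 2g - 2\<close>.\<close>

lemma funpow_commute_apply:
  assumes "f \<circ> c = c \<circ> f"
  shows "f ((c ^^ j) x) = (c ^^ j) (f x)"
proof (induction j arbitrary: x)
  case 0
  then show ?case by simp
next
  case (Suc j)
  have "f ((c ^^ Suc j) x) = c (f ((c ^^ j) x))"
    using assms by (metis comp_apply funpow.simps(2))
  also have "\<dots> = (c ^^ Suc j) (f x)" using Suc by simp
  finally show ?case .
qed

lemma dcycle_funpow_one:
  assumes "j < d"
  shows "(dcycle d ^^ j) 1 = j + 1"
proof -
  let ?L = "[1..<d+1]"
  have "map (dcycle d ^^ j) ?L = rotate j ?L"
    unfolding dcycle_def by (rule cyclic_rotation) simp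
  then have "map (dcycle d ^^ j) ?L ! 0 = rotate j ?L ! 0" by simp
  moreover have "map (dcycle d ^^ j) ?L ! 0 = (dcycle d ^^ j) 1"
    using assms by (simp only: nth_map length_upt nth_upt) simp
  moreover have "rotate j ?L ! 0 = j + 1"
    using assms by (simp del: upt_Suc add: nth_rotate)
  ultimately show ?thesis by simp
qed

lemma dcycle_funpow_pred_one:
  assumes "x \<in> {1..d}"
  shows "(dcycle d ^^ (x - 1)) 1 = x"
  using dcycle_funpow_one[of "x - 1" d] assms by auto

lemma commute_dcycle_apply:
  assumes "f \<circ> dcycle d = dcycle d \<circ> f" and "x \<in> {1..d}"
  shows "f x = (dcycle d ^^ (x - 1)) (f 1)"
  using funpow_commute_apply[OF assms(1), of "x - 1" 1] dcycle_funpow_pred_one[OF assms(2)]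
  by simp

lemma centraliser_dcycle_commute:
  assumes \<alpha>: "\<alpha> permutes {1..d}" and \<beta>: "\<beta> permutes {1..d}"
    and \<alpha>_comm: "\<alpha> \<circ> dcycle d = dcycle d \<circ> \<alpha>" and \<beta>_comm: "\<beta> \<circ> dcycle d = dcycle d \<circ> \<beta>"
  shows "\<alpha> \<circ> \<beta> = \<beta> \<circ> \<alpha>"
proof
  fix x
  let ?c = "dcycle d"
  show "(\<alpha> \<circ> \<beta>) x = (\<beta> \<circ> \<alpha>) x"
  proof (cases "x \<in> {1..d}")
    case False
    then show ?thesis using \<alpha> \<beta> by (simp add: permutes_not_in)
  next
    case True
    then have "1 \<in> {1..d}" by simp
    then have \<alpha>1: "\<alpha> 1 \<in> {1..d}" and \<beta>1: "\<beta> 1 \<in> {1..d}"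
      using permutes_in_image[OF \<alpha>] permutes_in_image[OF \<beta>] by blast+
    have "\<alpha> (\<beta> 1) = (?c ^^ (\<beta> 1 - 1 + (\<alpha> 1 - 1))) 1"
      using commute_dcycle_apply[OF \<alpha>_comm \<beta>1] dcycle_funpow_pred_one[OF \<alpha>1]
      by (simp add: funpow_add)
    moreover have "\<beta> (\<alpha> 1) = (?c ^^ (\<alpha> 1 - 1 + (\<beta> 1 - 1))) 1"
      using commute_dcycle_apply[OF \<beta>_comm \<alpha>1] dcycle_funpow_pred_one[OF \<beta>1]
      by (simp add: funpow_add)
    ultimately have "\<alpha> (\<beta> 1) = \<beta> (\<alpha> 1)" by (simp add: add.commute)
    moreover have "\<alpha> (\<beta> x) = (?c ^^ (x - 1)) (\<alpha> (\<beta> 1))"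
      using commute_dcycle_apply[OF \<beta>_comm True] funpow_commute_apply[OF \<alpha>_comm] by simp
    moreover have "\<beta> (\<alpha> x) = (?c ^^ (x - 1)) (\<beta> (\<alpha> 1))"
      using commute_dcycle_apply[OF \<alpha>_comm True] funpow_commute_apply[OF \<beta>_comm] by simp
    ultimately show ?thesis by simp
  qed
qed

lemma commutator_eq_id_if_commute:
  assumes "surj \<alpha>" and "surj \<beta>" and "\<alpha> \<circ> \<beta> = \<beta> \<circ> \<alpha>"
  shows "\<alpha> \<circ> \<beta> \<circ> inv \<alpha> \<circ> inv \<beta> = id"
proof -
  have "\<alpha> \<circ> \<beta> \<circ> inv \<alpha> \<circ> inv \<beta> = \<beta> \<circ> (\<alpha> \<circ> inv \<alpha>) \<circ> inv \<beta>"
    using assms(3) by (simp add: comp_assoc)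
  also have "\<dots> = id"
    using assms(1,2) by (simp add: surj_iff)
  finally show ?thesis .
qed

lemma cycle_type_id: "cycle_type d id = replicate_mset d 1"
proof -
  have "orbit id x = {x}" for x :: nat
    using orbit_eq_singleton_iff[of id x] by simp
  then have "cycle_type d id = image_mset card (mset_set ((\<lambda>x. {x}) ` {1..d}))"
    by (simp add: cycle_type_def)
  also have "\<dots> = image_mset (\<lambda>x. card {x}) (mset_set {1..d})"
    by (simp add: image_mset_mset_set[symmetric] multiset.map_comp comp_def)
  also have "\<dots> = replicate_mset d 1"
    by (simp add: image_mset_const_eq)
  finally show ?thesis .
qed

theorem mainTheorem11:
  fixes g d :: nat and ls :: "nat multiset" and a :: "nat \<Rightarrow> nat"
  assumes "g \<ge> 2" and "d \<ge> 2"
    and "\<forall>l\<in>#ls. l \<ge> 1"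
    and "sum_mset ls = d"
    and "sum_mset (image_mset (\<lambda>l. l - 1) ls) = 2 * g - 2"
    and "(\<Sum>i=1..d. i * a i) = d"
  shows "\<not> (\<exists>\<alpha> \<beta>. \<alpha> permutes {1..d} \<and> \<beta> permutes {1..d}
              \<and> cycle_type d (\<alpha> \<circ> \<beta> \<circ> inv \<alpha> \<circ> inv \<beta>) = ls
              \<and> transitive_on d \<alpha> \<beta>
              \<and> (\<forall>i\<in>{1..d}. count (cycle_type d \<beta>) i = a i)
              \<and> \<alpha> \<circ> dcycle d = dcycle d \<circ> \<alpha>
              \<and> \<beta> \<circ> dcycle d = dcycle d \<circ> \<beta>)"
proof
  assume "\<exists>\<alpha> \<beta>. \<alpha> permutes {1..d} \<and> \<beta> permutes {1..d}
              \<and> cycle_type d (\<alpha> \<circ> \<beta> \<circ> inv \<alpha> \<circ> inv \<beta>) = ls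
              \<and> transitive_on d \<alpha> \<beta>
              \<and> (\<forall>i\<in>{1..d}. count (cycle_type d \<beta>) i = a i)
              \<and> \<alpha> \<circ> dcycle d = dcycle d \<circ> \<alpha>
              \<and> \<beta> \<circ> dcycle d = dcycle d \<circ> \<beta>"
  then obtain \<alpha> \<beta> where \<alpha>: "\<alpha> permutes {1..d}" and \<beta>: "\<beta> permutes {1..d}"
    and ls: "cycle_type d (\<alpha> \<circ> \<beta> \<circ> inv \<alpha> \<circ> inv \<beta>) = ls"
    and \<alpha>_comm: "\<alpha> \<circ> dcycle d = dcycle d \<circ> \<alpha>" and \<beta>_comm: "\<beta> \<circ> dcycle d = dcycle d \<circ> \<beta>"
    by blast
  from \<alpha> \<beta> \<alpha>_comm \<beta>_comm have "\<alpha> \<circ> \<beta> = \<beta> \<circ> \<alpha>"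
    by (rule centraliser_dcycle_commute)
  then have "\<alpha> \<circ> \<beta> \<circ> inv \<alpha> \<circ> inv \<beta> = id"
    by (rule commutator_eq_id_if_commute[OF permutes_surj[OF \<alpha>] permutes_surj[OF \<beta>]])
  then have "ls = replicate_mset d 1"
    using ls cycle_type_id by simp
  then have "sum_mset (image_mset (\<lambda>l. l - 1) ls) = 0" by simp
  then show False using assms(1,5) by linarith
qed

end
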